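(* Consider the latent causal generative model described in the context. Let $\mathrm g$ be the true decoder and $\mathbf f=\hat{\mathrm g}^{-1}$ an estimated encoder, both smooth and invertible, and write $\mathbf f(\mathbf x)=(\mathbf f_\iota(\mathbf x),\mathbf f_\nu(\mathbf x))$, where $\mathbf f_\iota$ is the $d_\iota$-dimensional component intended to estimate the invariant noise $\mathbf n_\iota$ (its output is denoted $\hat{\mathbf n}_\iota$). For $(\mathbf n_\iota,\mathbf n_\nu,\mathbf u)$ let $\mathbf z(\mathbf n_\iota,\mathbf n_\nu,\mathbf u)$ be the unique solution of the linear structural equations. Assume that for any fixed $\mathbf n_\iota$ and any environments $\mathbf u,\mathbf u_0$, if $\mathbf N_\nu^{(\mathbf u)}$ and $\mathbf N_\nu^{(\mathbf u_0)}$ are independent draws from the corresponding noise distributions $\mathcal N(\boldsymbol\mu_\nu(\mathbf u),\operatorname{diag}\boldsymbol\beta_\nu(\mathbf u))$ and $\mathcal N(\boldsymbol\mu_\nu(\mathbf u_0),\operatorname{diag}\boldsymbol\beta_\nu(\mathbf u_0))$, then $$\mathbf f_\iota\big(\mathrm g(\mathbf z(\mathbf n_\iota,\mathbf N_\nu^{(\mathbf u)},\mathbf u))\big)=\mathbf f_\iota\big(\mathrm g(\mathbf z(\mathbf n_\iota,\mathbf N_\nu^{(\mathbf u_0)},\mathbf u_0))\big)\quad\text{a.s.}$$ Then there exists a smooth function $\mathbf h_\iota$ such that $\mathbf f_\iota\big(\mathrm g(\mathbf z(\mathbf n_\iota,\mathbf n_\nu,\mathbf u))\big)=\mathbf h_\iota(\mathbf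 n_\iota)$ almost surely, i.e. $\hat{\mathbf n}_\iota$ does not depend on $\mathbf n_\nu$.
   Context: Latent causal generative model: latent variables $\mathbf z_\iota\in\mathbb R^{d_\iota}$ and $\mathbf z_\nu\in\mathbb R^{d_\nu}$, $\mathbf z=(\mathbf z_\iota,\mathbf z_\nu)$, auxiliary environment label $\mathbf u$. Data are generated by $\mathbf z_\iota:=\boldsymbol\lambda_{\iota\iota}\mathbf z_\iota+\mathbf n_\iota$, $\mathbf n_\iota\sim\mathcal N(\boldsymbol\mu_\iota,\operatorname{diag}\boldsymbol\beta_\iota)$; $\mathbf z_\nu:=\boldsymbol\lambda_{\nu\iota}(\mathbf u)\mathbf z_\iota+\boldsymbol\lambda_{\nu\nu}(\mathbf u)\mathbf z_\nu+\mathbf n_\nu$, $\mathbf n_\nu\sim\mathcal N(\boldsymbol\mu_\nu(\mathbf u),\operatorname{diag}\boldsymbol\beta_\nu(\mathbf u))$ (non-degenerate, positive variances), independent of $\mathbf n_\iota$; $\mathbf x:=\mathrm g(\mathbf z)$. The matrices $\boldsymbol\lambda_{\iota\iota}$ and $\boldsymbol\lambda_{\nu\nu}(\mathbf u)$ are strictly lower triangular (DAG constraint), so the structural equations have a unique solution $\mathbf z$ for given noises and $\mathbf u$, which is linear in $(\mathbf n_\iota,\mathbf n_\nu)$. *)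

theory Defs
  imports "HOL-Probability.Probability"
begin

fun iter_dderiv :: "'a::real_normed_vector list \<Rightarrow> ('a \<Rightarrow> 'b::real_normed_vector) \<Rightarrow> 'a \<Rightarrow> 'b" where
  "iter_dderiv [] f = f"
| "iter_dderiv (v # vs) f = (\<lambda>x. frechet_derivative (iter_dderiv vs f) (at x) v)"

definition smooth :: "('a::real_normed_vector \<Rightarrow> 'b::real_normed_vector) \<Rightarrow> bool" where
  "smooth f \<longleftrightarrow> (\<forall>vs. \<forall>x. iter_dderiv vs f differentiable (at x))"

definition strictly_lower :: "real^('n::{finite,linorder})^('n::{finite,linorder}) \<Rightarrow> bool" where
  "strictly_lower A \<longleftrightarrow> (\<forall>i j. i \<le> j \<longrightarrow> A $ i $ j = 0)"

text \<open>Gaussian distribution N(mu, diag beta) on real^'n (beta = variances).\<close>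
definition gauss_diag :: "real^'n \<Rightarrow> real^'n \<Rightarrow> (real^'n) measure" where
  "gauss_diag \<mu> \<beta> = density lborel (\<lambda>x. ennreal (\<Prod>i\<in>UNIV. normal_density (\<mu> $ i) (sqrt (\<beta> $ i)) (x $ i)))"

definition sem_eqs :: "real^'i^'i \<Rightarrow> real^'i^'v \<Rightarrow> real^'v^'v \<Rightarrow> real^'i \<Rightarrow> real^'v
    \<Rightarrow> (real^'i) \<times> (real^'v) \<Rightarrow> bool" where
  "sem_eqs Lii Lni Lnn ni nn z \<longleftrightarrow>
     fst z = Lii *v fst z + ni \<and> snd z = Lni *v fst z + Lnn *v snd z + nn"

definition sem_sol :: "real^'i^'i \<Rightarrow> real^'i^'v \<Rightarrow> real^'v^'v \<Rightarrow> real^'i \<Rightarrow> real^'v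
    \<Rightarrow> (real^'i) \<times> (real^'v)" where
  "sem_sol Lii Lni Lnn ni nn = (THE z. sem_eqs Lii Lni Lnn ni nn z)"

end

theory Submission
  imports Defs
begin

text \<open>For fixed \<open>n\<^sub>\<iota>\<close> the map \<open>n\<^sub>\<nu> \<mapsto> f\<^sub>\<iota>(g(z(n\<^sub>\<iota>, n\<^sub>\<nu>, u)))\<close> is continuous:
  \<open>f\<close> and \<open>g\<close> are smooth, and the acyclicity of the graph makes \<open>z\<close> a linear function
  of the noise. The invariance hypothesis says that two such maps, for environments \<open>u\<close> and \<open>u\<^sub>0\<close>,
  agree almost surely on independent non-degenerate Gaussian noises. A product of such
  Gaussians charges every nonempty open set, and the set where two continuous maps differ is
  open, so the maps agree everywhere: \<open>f\<^sub>\<iota>(g(z(n\<^sub>\<iota>, n\<^sub>\<nu>, u)))\<close> depends on \<open>n\<^sub>\<iota>\<close> alone.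
  Taking \<open>n\<^sub>\<nu> = 0\<close> in an arbitrary environment gives \<open>h\<^sub>\<iota>\<close>, smooth as a composite of
  smooth maps.\<close>

abbreviation dderiv :: "'a::real_normed_vector \<Rightarrow> ('a \<Rightarrow> 'b::real_normed_vector) \<Rightarrow> 'a \<Rightarrow> 'b" where
  "dderiv v h \<equiv> \<lambda>x. frechet_derivative h (at x) v"

lemma smooth_coinduct:
  assumes "h \<in> S"
    and closed: "\<And>k. k \<in> S \<Longrightarrow> (\<forall>x. k differentiable (at x)) \<and> (\<forall>v. dderiv v k \<in> S)"
  shows "smooth h"
proof -
  have "iter_dderiv vs k \<in> S" if "k \<in> S" for vs k
    using that by (induction vs) (use closed in auto)
  then show ?thesis
    using assms unfolding smooth_def by blast
qed

lemma smooth_has_derivative: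
  "smooth h \<Longrightarrow> (h has_derivative frechet_derivative h (at x)) (at x)"
  unfolding smooth_def frechet_derivative_works[symmetric] by (metis iter_dderiv.simps(1))

lemma smooth_imp_continuous_on: "smooth h \<Longrightarrow> continuous_on S h"
  by (meson continuous_at_imp_continuous_on differentiable_def
      differentiable_imp_continuous_within smooth_has_derivative)

lemma smooth_dderiv:
  assumes "smooth h"
  shows "smooth (dderiv v h)"
proof -
  have "iter_dderiv vs (dderiv v h) = iter_dderiv (vs @ [v]) h" for vs
    by (induction vs) auto
  then show ?thesis
    using assms unfolding smooth_def by metis
qed

lemma dderiv_eq: "(\<And>x. (h has_derivative D x) (at x)) \<Longrightarrow> dderiv v h = (\<lambda>x. D x v)"
  by (metis frechet_derivative_at)

inductive_set sums_of :: "('a \<Rightarrow> 'b::plus) set \<Rightarrow> ('a \<Rightarrow> 'b) set" for G where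
  generator: "p \<in> G \<Longrightarrow> p \<in> sums_of G"
| add: "p \<in> sums_of G \<Longrightarrow> q \<in> sums_of G \<Longrightarrow> (\<lambda>x. p x + q x) \<in> sums_of G"

lemma sums_of_sum:
  assumes "finite I" "I \<noteq> {}" "\<And>i. i \<in> I \<Longrightarrow> F i \<in> sums_of G"
  shows "(\<lambda>x. \<Sum>i\<in>I. F i x) \<in> sums_of G"
  using assms by (induction I rule: finite_ne_induct) (auto intro: sums_of.intros)

text \<open>The product and chain rules turn one term into a sum of terms of the same shape, so the
  coinduction is run on the additive closure of a set of generators.\<close>
lemma smooth_sums_of_coinduct:
  assumes closed: "\<And>p. p \<in> G \<Longrightarrow> (\<forall>x. p differentiable (at x)) \<and> (\<forall>v. dderiv v p \<in> sums_of G)"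
    and "p \<in> sums_of G"
  shows "smooth p"
  using \<open>p \<in> sums_of G\<close>
proof (rule smooth_coinduct)
  fix k assume "k \<in> sums_of G"
  then show "(\<forall>x. k differentiable (at x)) \<and> (\<forall>v. dderiv v k \<in> sums_of G)"
  proof (induction rule: sums_of.induct)
    case (generator p)
    then show ?case by (rule closed)
  next
    case (add p q)
    have "((\<lambda>x. p x + q x) has_derivative
        (\<lambda>w. frechet_derivative p (at x) w + frechet_derivative q (at x) w)) (at x)" for x
      using add.IH by (intro has_derivative_add) (simp_all add: frechet_derivative_works)
    then have "(\<lambda>x. p x + q x) differentiable (at x)"
      and "dderiv v (\<lambda>x. p x + q x) = (\<lambda>x. dderiv v p x + dderiv v q x)" for x v
      by (auto simp: differentiable_def intro: dderiv_eq)
    then show ?case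
      using add.IH by (auto intro: sums_of.add)
  qed
qed

lemma smooth_const: "smooth (\<lambda>x. c)"
proof (rule smooth_coinduct[where S = "range (\<lambda>c x. c)"])
  fix k :: "'a \<Rightarrow> 'b" assume "k \<in> range (\<lambda>c x. c)"
  then obtain c where k: "k = (\<lambda>x. c)" by auto
  then have "dderiv v k = (\<lambda>x. 0)" for v
    by (auto intro: dderiv_eq)
  then show "(\<forall>x. k differentiable (at x)) \<and> (\<forall>v. dderiv v k \<in> range (\<lambda>c x. c))"
    using k by auto
qed auto

lemma smooth_bounded_linear:
  assumes "bounded_linear l"
  shows "smooth l"
proof (rule smooth_coinduct[where S = "insert l (range (\<lambda>c x. c))"])
  fix k assume "k \<in> insert l (range (\<lambda>c x. c))"
  moreover have "l differentiable (at x)" and "dderiv v l = (\<lambda>x. l v)" for x v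
    using bounded_linear_imp_has_derivative[OF assms]
    by (auto simp: differentiable_def intro: dderiv_eq)
  moreover have "dderiv v (\<lambda>x. c) = (\<lambda>x. 0)" for v and c :: 'b
    by (rule dderiv_eq) simp
  ultimately show "(\<forall>x. k differentiable (at x)) \<and> (\<forall>v. dderiv v k \<in> insert l (range (\<lambda>c x. c)))"
    by auto
qed simp

lemma smooth_bilinear:
  assumes mul: "bounded_bilinear mul" and "smooth a" "smooth b"
  shows "smooth (\<lambda>x. mul (a x) (b x))"
proof (rule smooth_sums_of_coinduct[where G = "{\<lambda>x. mul (a x) (b x) | a b. smooth a \<and> smooth b}"])
  let ?G = "{\<lambda>x. mul (a x) (b x) | a b. smooth a \<and> smooth b}"
  fix p assume "p \<in> ?G"
  then obtain a b where p: "p = (\<lambda>x. mul (a x) (b x))" and ab: "smooth a" "smooth b"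
    by blast
  have "(p has_derivative (\<lambda>w. mul (a x) (frechet_derivative b (at x) w)
      + mul (frechet_derivative a (at x) w) (b x))) (at x)" for x
    unfolding p using ab by (intro bounded_bilinear.FDERIV[OF mul] smooth_has_derivative)
  then have "p differentiable (at x)"
    and "dderiv v p = (\<lambda>x. mul (a x) (dderiv v b x) + mul (dderiv v a x) (b x))" for x v
    by (auto simp: differentiable_def intro: dderiv_eq)
  moreover have "(\<lambda>x. mul (a x) (dderiv v b x)) \<in> ?G" "(\<lambda>x. mul (dderiv v a x) (b x)) \<in> ?G" for v
    using ab smooth_dderiv[of a v] smooth_dderiv[of b v]
    by (intro CollectI exI conjI refl; simp)+
  ultimately show "(\<forall>x. p differentiable (at x)) \<and> (\<forall>v. dderiv v p \<in> sums_of ?G)"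
    by (simp add: sums_of.add sums_of.generator)
qed (use assms(2,3) in \<open>intro sums_of.generator CollectI exI[of _ a] exI[of _ b], simp\<close>)

lemma linear_Basis_expansion:
  fixes D :: "'a::euclidean_space \<Rightarrow> 'b::real_vector"
  assumes "linear D"
  shows "D w = (\<Sum>i\<in>Basis. (w \<bullet> i) *\<^sub>R D i)"
proof -
  have "D (\<Sum>i\<in>Basis. (w \<bullet> i) *\<^sub>R i) = (\<Sum>i\<in>Basis. (w \<bullet> i) *\<^sub>R D i)"
    using assms by (simp add: linear_sum linear_scale)
  then show ?thesis
    by (simp add: euclidean_representation)
qed

lemma dderiv_scaleR_compose:
  fixes g :: "'a::real_normed_vector \<Rightarrow> 'b::euclidean_space" and k :: "'b \<Rightarrow> 'c::real_normed_vector"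
  assumes a: "smooth a" and k: "smooth k" and g: "smooth g"
  shows "(\<lambda>x. a x *\<^sub>R k (g x)) differentiable (at x)"
    and "dderiv v (\<lambda>x. a x *\<^sub>R k (g x)) = (\<lambda>x.
      (\<Sum>i\<in>Basis. (a x * (dderiv v g x \<bullet> i)) *\<^sub>R dderiv i k (g x)) + dderiv v a x *\<^sub>R k (g x))"
proof -
  have deriv: "((\<lambda>x. a x *\<^sub>R k (g x)) has_derivative (\<lambda>w. a x *\<^sub>R frechet_derivative k (at (g x))
      (frechet_derivative g (at x) w) + frechet_derivative a (at x) w *\<^sub>R k (g x))) (at x)" for x
    using assms
    by (intro has_derivative_scaleR has_derivative_compose[of g _ _ _ k] smooth_has_derivative)
  then show "(\<lambda>x. a x *\<^sub>R k (g x)) differentiable (at x)"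
    by (auto simp: differentiable_def)
  have "linear (frechet_derivative k (at y))" for y
    using k has_derivative_linear smooth_has_derivative by blast
  note expansion = linear_Basis_expansion[OF this]
  show "dderiv v (\<lambda>x. a x *\<^sub>R k (g x)) = (\<lambda>x.
      (\<Sum>i\<in>Basis. (a x * (dderiv v g x \<bullet> i)) *\<^sub>R dderiv i k (g x)) + dderiv v a x *\<^sub>R k (g x))"
  proof
    fix x
    show "dderiv v (\<lambda>x. a x *\<^sub>R k (g x)) x =
      (\<Sum>i\<in>Basis. (a x * (dderiv v g x \<bullet> i)) *\<^sub>R dderiv i k (g x)) + dderiv v a x *\<^sub>R k (g x)"
      using fun_cong[OF dderiv_eq[OF deriv, of v], of x] expansion[of "g x" "dderiv v g x"]
      by (simp add: scaleR_sum_right)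
  qed
qed

text \<open>Coinduction over the terms \<open>a \<cdot> (k \<circ> g)\<close> with \<open>a\<close>, \<open>k\<close> smooth: the chain rule, written in
  the basis of the intermediate space, has products of smooth functions as coefficients.\<close>
lemma smooth_compose:
  fixes g :: "'a::real_normed_vector \<Rightarrow> 'b::euclidean_space" and k :: "'b \<Rightarrow> 'c::real_normed_vector"
  assumes k: "smooth k" and g: "smooth g"
  shows "smooth (\<lambda>x. k (g x))"
proof (rule smooth_sums_of_coinduct[where G = "{\<lambda>x. a x *\<^sub>R k (g x) | a k. smooth a \<and> smooth k}"])
  let ?G = "{\<lambda>x. a x *\<^sub>R k (g x) | a k. smooth a \<and> smooth k}"
  fix p assume "p \<in> ?G"
  then obtain a k where p: "p = (\<lambda>x. a x *\<^sub>R k (g x))" and ak: "smooth a" "smooth k"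
    by blast
  have terms_in_G: "(\<lambda>x. (a x * (dderiv v g x \<bullet> i)) *\<^sub>R dderiv i k (g x)) \<in> ?G" for v i
  proof -
    have "smooth (\<lambda>x. dderiv v g x \<bullet> i)"
      by (rule smooth_bilinear[OF bounded_bilinear_inner smooth_dderiv[OF g] smooth_const])
    then have "smooth (\<lambda>x. a x * (dderiv v g x \<bullet> i))"
      by (rule smooth_bilinear[OF bounded_bilinear_mult ak(1)])
    then show ?thesis
      using smooth_dderiv[OF ak(2), of i]
      by (intro CollectI exI[of _ "\<lambda>x. a x * (dderiv v g x \<bullet> i)"] exI[of _ "dderiv i k"]) simp
  qed
  have last_term_in_G: "(\<lambda>x. dderiv v a x *\<^sub>R k (g x)) \<in> ?G" for v
    using smooth_dderiv[OF ak(1), of v] ak(2)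
    by (intro CollectI exI[of _ "dderiv v a"] exI[of _ k]) simp
  show "(\<forall>x. p differentiable (at x)) \<and> (\<forall>v. dderiv v p \<in> sums_of ?G)"
    unfolding p dderiv_scaleR_compose(2)[OF ak g] using dderiv_scaleR_compose(1)[OF ak g]
      terms_in_G last_term_in_G
    by (intro conjI allI sums_of.add sums_of_sum sums_of.generator) (simp_all add: nonempty_Basis)
next
  show "(\<lambda>x. k (g x)) \<in> sums_of {\<lambda>x. a x *\<^sub>R k (g x) | a k. smooth a \<and> smooth k}"
    using smooth_const[of 1] k
    by (intro sums_of.generator CollectI exI[of _ "\<lambda>_. 1"] exI[of _ k]) simp
qed

lemma strictly_lower_fixpoint:
  fixes L :: "real^('n::{finite,linorder})^('n::{finite,linorder})"
  assumes L: "strictly_lower L" and z: "L *v z = z"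
  shows "z = 0"
proof (rule ccontr)
  assume "z \<noteq> 0"
  then have ne: "{i. z $ i \<noteq> 0} \<noteq> {}"
    by (auto simp: vec_eq_iff)
  define i where "i = Min {i. z $ i \<noteq> 0}"
  have zi: "z $ i \<noteq> 0"
    using Min_in[OF _ ne] by (simp add: i_def)
  have "z $ j = 0" if "j < i" for j
  proof (rule ccontr)
    assume "z $ j \<noteq> 0"
    then have "i \<le> j"
      by (simp add: i_def Min_le)
    with that show False
      by simp
  qed
  then have terms_zero: "L $ i $ j * z $ j = 0" for j
    using L by (cases "i \<le> j") (auto simp: strictly_lower_def)
  have "(L *v z) $ i = 0"
    by (simp add: matrix_vector_mult_def terms_zero)
  with z zi show False
    by simp
qed

definition sem_noise :: "real^'i^'i \<Rightarrow> real^'i^'v \<Rightarrow> real^'v^'v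
    \<Rightarrow> (real^'i) \<times> (real^'v) \<Rightarrow> (real^'i) \<times> (real^'v)" where
  "sem_noise Lii Lni Lnn z = (fst z - Lii *v fst z, snd z - Lni *v fst z - Lnn *v snd z)"

lemma sem_eqs_iff_sem_noise:
  "sem_eqs Lii Lni Lnn ni nn z \<longleftrightarrow> sem_noise Lii Lni Lnn z = (ni, nn)"
  by (auto simp: sem_eqs_def sem_noise_def algebra_simps)

lemma bounded_linear_sem_noise: "bounded_linear (sem_noise Lii Lni Lnn)"
  unfolding sem_noise_def
  by (intro bounded_linear_Pair bounded_linear_sub bounded_linear_fst bounded_linear_snd
      bounded_linear_compose[OF matrix_vector_mul_bounded_linear])

lemma inj_sem_noise:
  assumes "strictly_lower Lii" "strictly_lower Lnn"
  shows "inj (sem_noise Lii Lni Lnn)"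
proof -
  have "z = 0" if "sem_noise Lii Lni Lnn z = 0" for z
  proof -
    have "Lii *v fst z = fst z"
      using that by (simp add: sem_noise_def zero_prod_def)
    then have "fst z = 0"
      by (rule strictly_lower_fixpoint[OF assms(1)])
    moreover from this have "Lnn *v snd z = snd z"
      using that by (simp add: sem_noise_def zero_prod_def)
    then have "snd z = 0"
      by (rule strictly_lower_fixpoint[OF assms(2)])
    ultimately show "z = 0"
      by (simp add: prod_eq_iff)
  qed
  then show ?thesis
    using bounded_linear_sem_noise linear_conv_bounded_linear linear_inj_iff_eq_0 by blast
qed

lemma sem_sol_eq_inv_sem_noise:
  assumes "strictly_lower Lii" "strictly_lower Lnn"
  shows "sem_sol Lii Lni Lnn ni nn = inv (sem_noise Lii Lni Lnn) (ni, nn)"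
proof -
  let ?N = "sem_noise Lii Lni Lnn"
  have "surj ?N"
    using linear_inj_imp_surj bounded_linear_sem_noise inj_sem_noise[OF assms]
    by (metis linear_conv_bounded_linear)
  then have "sem_eqs Lii Lni Lnn ni nn (inv ?N (ni, nn))"
    by (simp add: sem_eqs_iff_sem_noise surj_f_inv_f)
  moreover have "z = inv ?N (ni, nn)" if "sem_eqs Lii Lni Lnn ni nn z" for z
    using that \<open>surj ?N\<close> inj_sem_noise[OF assms]
    by (simp add: sem_eqs_iff_sem_noise inv_f_eq)
  ultimately show ?thesis
    unfolding sem_sol_def by (rule the_equality)
qed

lemma bounded_linear_sem_sol:
  assumes "strictly_lower Lii" "strictly_lower Lnn"
  shows "bounded_linear (\<lambda>n. sem_sol Lii Lni Lnn (fst n) (snd n))"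
  using inj_linear_imp_inv_bounded_linear[OF bounded_linear_sem_noise inj_sem_noise[OF assms]]
  by (simp add: sem_sol_eq_inv_sem_noise[OF assms])

definition full_support :: "'a::topological_space measure \<Rightarrow> bool" where
  "full_support M \<longleftrightarrow> (\<forall>U. open U \<longrightarrow> U \<noteq> {} \<longrightarrow> 0 < emeasure M U)"

lemma full_support_lborel: "full_support (lborel :: 'a::euclidean_space measure)"
  unfolding full_support_def
proof (intro allI impI)
  fix U :: "'a set" assume "open U" "U \<noteq> {}"
  then obtain a b where box: "box a b \<noteq> {}" "box a b \<subseteq> U"
    by (metis ex_in_conv open_contains_box)
  then have "0 < emeasure lborel (box a b)"
    by (force simp: emeasure_lborel_box_eq box_ne_empty algebra_simps intro!: prod_pos)
  also have "\<dots> \<le> emeasure lborel U"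
    using box \<open>open U\<close> by (intro emeasure_mono) auto
  finally show "0 < emeasure lborel U" .
qed

lemma full_support_density:
  fixes M :: "'a::topological_space measure"
  assumes M: "full_support M" "sets M = sets borel"
    and f: "f \<in> borel_measurable M" "\<And>x. 0 < f x"
  shows "full_support (density M f)"
  unfolding full_support_def
proof (intro allI impI)
  fix U :: "'a set" assume U: "open U" "U \<noteq> {}"
  then have "U \<in> sets M"
    using M(2) by simp
  show "0 < emeasure (density M f) U"
  proof (rule ccontr)
    assume "\<not> 0 < emeasure (density M f) U"
    then have "U \<in> null_sets (density M f)"
      using \<open>U \<in> sets M\<close> by (simp add: null_sets_def)
    then have "AE x in M. x \<in> U \<longrightarrow> f x = 0"
      using f(1) by (simp add: null_sets_density_iff)
    then have "AE x in M. x \<notin> U"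
      by (rule eventually_mono) (metis f(2) less_irrefl)
    then have "emeasure M U = 0"
      using \<open>U \<in> sets M\<close> by (simp add: AE_iff_null_sets[symmetric] null_setsD1)
    moreover have "0 < emeasure M U"
      using M(1) U unfolding full_support_def by blast
    ultimately show False
      by simp
  qed
qed

lemma sets_pair_measure_borel:
  fixes M1 :: "'a::second_countable_topology measure" and M2 :: "'b::second_countable_topology measure"
  assumes "sets M1 = sets borel" "sets M2 = sets borel"
  shows "sets (M1 \<Otimes>\<^sub>M M2) = sets borel"
  using sets_pair_measure_cong[OF assms] by (simp only: borel_prod)

lemma full_support_pair_measure:
  fixes M1 :: "'a::second_countable_topology measure" and M2 :: "'b::second_countable_topology measure"
  assumes full: "full_support M1" "full_support M2"
    and sets: "sets M1 = sets borel" "sets M2 = sets borel"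
    and "sigma_finite_measure M2"
  shows "full_support (M1 \<Otimes>\<^sub>M M2)"
  unfolding full_support_def
proof (intro allI impI)
  fix U :: "('a \<times> 'b) set" assume "open U" "U \<noteq> {}"
  then obtain a b where "(a, b) \<in> U"
    by auto
  then obtain A B where AB: "open A" "open B" "(a, b) \<in> A \<times> B" "A \<times> B \<subseteq> U"
    using \<open>open U\<close> open_prod_elim by metis
  have "0 < emeasure M1 A * emeasure M2 B"
    using full AB by (auto simp: full_support_def ennreal_zero_less_mult_iff)
  also have "\<dots> = emeasure (M1 \<Otimes>\<^sub>M M2) (A \<times> B)"
    using sets AB by (intro sigma_finite_measure.emeasure_pair_measure_Times[symmetric] assms) auto
  also have "\<dots> \<le> emeasure (M1 \<Otimes>\<^sub>M M2) U"
    using AB \<open>open U\<close> sets_pair_measure_borel[OF sets] by (intro emeasure_mono) auto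
  finally show "0 < emeasure (M1 \<Otimes>\<^sub>M M2) U" .
qed

lemma continuous_AE_eq_imp_eq:
  fixes f g :: "'a::topological_space \<Rightarrow> 'b::t2_space"
  assumes M: "full_support M" "sets M = sets borel"
    and "continuous_on UNIV f" "continuous_on UNIV g"
    and "AE x in M. f x = g x"
  shows "f x = g x"
proof (rule ccontr)
  let ?U = "{x. f x \<noteq> g x}"
  assume "f x \<noteq> g x"
  then have "?U \<noteq> {}"
    by blast
  moreover have "open ?U"
    using assms(3,4) by (rule open_Collect_neq)
  ultimately have "0 < emeasure M ?U"
    using M(1) unfolding full_support_def by blast
  moreover have "?U \<in> null_sets M"
    using \<open>open ?U\<close> M(2) assms(5) by (subst AE_iff_null_sets) auto
  then have "emeasure M ?U = 0"
    by (rule null_setsD1)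
  ultimately show False
    by simp
qed

lemma continuous_AE_pair_eq_imp_eq:
  fixes M1 :: "'a::second_countable_topology measure" and M2 :: "'b::second_countable_topology measure"
    and f :: "'a \<Rightarrow> 'c::t2_space" and g :: "'b \<Rightarrow> 'c"
  assumes "full_support M1" "full_support M2" "sets M1 = sets borel" "sets M2 = sets borel"
    and "sigma_finite_measure M2"
    and f: "continuous_on UNIV f" and g: "continuous_on UNIV g"
    and "AE p in M1 \<Otimes>\<^sub>M M2. f (fst p) = g (snd p)"
  shows "f a = g b"
proof -
  have "continuous_on UNIV (\<lambda>p. f (fst p))" "continuous_on UNIV (\<lambda>p. g (snd p))"
    by (intro continuous_on_compose2[OF f] continuous_on_compose2[OF g] continuous_intros; simp)+
  from continuous_AE_eq_imp_eq[OF full_support_pair_measure sets_pair_measure_borel this,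
      of M1 M2 "(a, b)"]
  show ?thesis
    using assms by simp
qed

lemma gauss_diag_density_measurable:
  "(\<lambda>x::real^'n. ennreal (\<Prod>i\<in>UNIV. normal_density (\<mu> $ i) (sqrt (\<beta> $ i)) (x $ i)))
    \<in> borel_measurable lborel"
  by measurable

lemma sets_gauss_diag: "sets (gauss_diag \<mu> \<beta>) = sets borel"
  by (simp add: gauss_diag_def)

lemma sigma_finite_gauss_diag: "sigma_finite_measure (gauss_diag \<mu> \<beta>)"
  unfolding gauss_diag_def
  by (subst sigma_finite_measure.sigma_finite_iff_density_finite[OF sigma_finite_lborel
        gauss_diag_density_measurable]) simp

lemma full_support_gauss_diag:
  assumes "\<And>i. 0 < \<beta> $ i"
  shows "full_support (gauss_diag \<mu> \<beta>)"
  unfolding gauss_diag_def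
  using assms by (intro full_support_density full_support_lborel gauss_diag_density_measurable)
    (auto intro!: prod_pos normal_density_pos)

theorem lemma4:
  fixes Lii :: "real^('i::{finite,linorder})^('i::{finite,linorder})"
    and Lni :: "'u \<Rightarrow> real^('i::{finite,linorder})^('v::{finite,linorder})"
    and Lnn :: "'u \<Rightarrow> real^('v::{finite,linorder})^('v::{finite,linorder})"
    and mui betai :: "real^('i::{finite,linorder})"
    and muv betav :: "'u \<Rightarrow> real^('v::{finite,linorder})"
    and g :: "(real^('i::{finite,linorder})) \<times> (real^('v::{finite,linorder})) \<Rightarrow> 'x::euclidean_space"
    and f :: "'x \<Rightarrow> (real^('i::{finite,linorder})) \<times> (real^('v::{finite,linorder}))"
  assumes dag_ii: "strictly_lower Lii"
    and dag_nn: "\<And>u. strictly_lower (Lnn u)"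
    and pos_i: "\<And>k. betai $ k > 0"
    and pos_v: "\<And>u k. betav u $ k > 0"
    and g_smooth: "smooth g" and g_inv: "bij g"
    and f_smooth: "smooth f" and f_inv: "bij f"
    and invariance: "\<And>ni u u0. AE p in gauss_diag (muv u) (betav u) \<Otimes>\<^sub>M gauss_diag (muv u0) (betav u0).
          fst (f (g (sem_sol Lii (Lni u) (Lnn u) ni (fst p)))) =
          fst (f (g (sem_sol Lii (Lni u0) (Lnn u0) ni (snd p))))"
  shows "\<exists>h :: real^('i::{finite,linorder}) \<Rightarrow> real^('i::{finite,linorder}). smooth h \<and>
           (\<forall>u. AE n in gauss_diag mui betai \<Otimes>\<^sub>M gauss_diag (muv u) (betav u).
                  fst (f (g (sem_sol Lii (Lni u) (Lnn u) (fst n) (snd n)))) = h (fst n))"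
proof -
  define F where "F u n = fst (f (g (sem_sol Lii (Lni u) (Lnn u) (fst n) (snd n))))" for u n
  have F_smooth: "smooth (F u)" for u
    unfolding F_def
    by (rule smooth_compose[OF smooth_bounded_linear[OF bounded_linear_fst]
          smooth_compose[OF f_smooth smooth_compose[OF g_smooth
            smooth_bounded_linear[OF bounded_linear_sem_sol[OF dag_ii dag_nn]]]]])
  have F_continuous: "continuous_on UNIV (\<lambda>nn. F u (ni, nn))" for u ni
    by (intro continuous_on_compose2[OF smooth_imp_continuous_on[OF F_smooth]] continuous_intros)
      auto
  have F_indep: "F u (ni, a) = F u0 (ni, b)" for u u0 ni a b
    using invariance[where ni = ni and u = u and u0 = u0] pos_v
    by (intro continuous_AE_pair_eq_imp_eq[OF full_support_gauss_diag full_support_gauss_diag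
          sets_gauss_diag sets_gauss_diag sigma_finite_gauss_diag F_continuous F_continuous])
      (simp_all add: F_def)
  define h where "h ni = F undefined (ni, 0)" for ni
  have "smooth h"
    unfolding h_def
    by (rule smooth_compose[OF F_smooth smooth_bounded_linear])
      (intro bounded_linear_Pair bounded_linear_ident bounded_linear_zero)
  moreover have "F u n = h (fst n)" for u n
    unfolding h_def using F_indep by (metis prod.collapse)
  ultimately show ?thesis
    unfolding F_def by auto
qed

end
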